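(* Let $s$ and $r$ be positive integers with $s\le r$, and let $\alpha_s=(4^s-1)^{1/s}$. Then the number $f_s(r)$ of $s$-bad pairs of binary vectors of length $r$ satisfies $$f_s(r)\le 2s\,4^{s-1}\alpha_s^{\,r}.$$
   Context: Let ${\mathbf e}_1,\ldots,{\mathbf e}_s$ denote the standard basis vectors of length $s$ (binary vectors with a single $1$) and $\mathbf{0}_s$ the zero vector of length $s$. A pair of binary vectors ${\mathbf x}=(x_0,\ldots,x_{r-1})$, ${\mathbf y}=(y_0,\ldots,y_{r-1})\in\{0,1\}^r$ is called $s$-good if for every $h=1,\ldots,s$ there exists at least one pair of indices $(i,j)$ with $0\le i,j\le r-s$ such that $(x_i,\ldots,x_{i+s-1})={\mathbf e}_h$, $(x_j,\ldots,x_{j+s-1})=\mathbf{0}_s$, $(y_i,\ldots,y_{i+s-1})=\mathbf{0}_s$ and $(y_j,\ldots,y_{j+s-1})={\mathbf e}_h$. A pair is $s$-bad if it is not $s$-good. Pairs are ordered pairs, counted among all $4^r$ pairs $({\mathbf x},{\mathbf y})$. *)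

theory Defs
  imports Complex_Main
begin

text \<open>Binary vectors of length r are lists of booleans (True = 1).
  The window of x of length s starting at index i is take s (drop i x).\<close>

definition window :: "bool list \<Rightarrow> nat \<Rightarrow> nat \<Rightarrow> bool list" where
  "window x i s = take s (drop i x)"

text \<open>Standard basis vector e_h of length s (h = 1..s): a single 1 at position h.\<close>
definition unit_vec :: "nat \<Rightarrow> nat \<Rightarrow> bool list" where
  "unit_vec s h = map (\<lambda>k. k = h - 1) [0..<s]"

definition zero_vec :: "nat \<Rightarrow> bool list" where
  "zero_vec s = replicate s False"

definition s_good :: "nat \<Rightarrow> bool list \<Rightarrow> bool list \<Rightarrow> bool" where
  "s_good s x y \<longleftrightarrow> length x = length y \<and>
     (\<forall>h\<in>{1..s}. \<exists>i j. i + s \<le> length x \<and> j + s \<le> length x \<and>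
        window x i s = unit_vec s h \<and> window x j s = zero_vec s \<and>
        window y i s = zero_vec s \<and> window y j s = unit_vec s h)"

definition s_bad :: "nat \<Rightarrow> bool list \<Rightarrow> bool list \<Rightarrow> bool" where
  "s_bad s x y \<longleftrightarrow> \<not> s_good s x y"

definition f :: "nat \<Rightarrow> nat \<Rightarrow> nat" where
  "f s r = card {(x, y). length x = r \<and> length y = r \<and> s_bad s x y}"

end

theory Submission
  imports Defs
begin

text \<open>A bad pair misses one of the $2s$ patterns $(e_h, 0)$, $(0, e_h)$ at every window
  position, in particular at the $\lfloor r/s \rfloor$ disjoint aligned blocks. Each such block
  then admits at most $4^s - 1$ of the $4^s$ possible contents, and the remaining $r \bmod s$
  positions at most $4$ each, so $f_s(r) \le 2s\,(4^s-1)^{\lfloor r/s \rfloor}\, 4^{r \bmod s}$,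
  which is at most $2s\,4^{s-1}\alpha_s^r$.\<close>

lemma card_bool_lists_length: "card {xs :: bool list. length xs = n} = 2 ^ n"
  using card_lists_length_eq[of "UNIV :: bool set" n] by simp

definition aligned_avoiding ::
    "nat \<Rightarrow> bool list \<Rightarrow> bool list \<Rightarrow> nat \<Rightarrow> nat \<Rightarrow> (bool list \<times> bool list) set" where
  "aligned_avoiding s a b q t = {(x, y). length x = q * s + t \<and> length y = q * s + t \<and>
     (\<forall>k<q. \<not> (window x (k * s) s = a \<and> window y (k * s) s = b))}"

lemma finite_aligned_avoiding: "finite (aligned_avoiding s a b q t)"
proof (rule finite_subset)
  show "aligned_avoiding s a b q t \<subseteq> {x. length x = q * s + t} \<times> {y. length y = q * s + t}"
    by (auto simp: aligned_avoiding_def)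
qed (simp add: finite_list_length)

lemma aligned_avoiding_Suc_subset:
  "aligned_avoiding s a b (Suc q) t \<subseteq> (\<lambda>((u, v), (x, y)). (u @ x, v @ y)) `
     (({u. length u = s} \<times> {v. length v = s} - {(a, b)}) \<times> aligned_avoiding s a b q t)"
proof clarify
  fix x y assume "(x, y) \<in> aligned_avoiding s a b (Suc q) t"
  then have len: "length x = s + (q * s + t)" "length y = s + (q * s + t)"
    and avoid: "\<And>k. k < Suc q \<Longrightarrow> \<not> (window x (k * s) s = a \<and> window y (k * s) s = b)"
    by (auto simp: aligned_avoiding_def)
  have "(take s x, take s y) \<in> {u. length u = s} \<times> {v. length v = s} - {(a, b)}"
    using avoid[of 0] len by (auto simp: window_def)
  moreover have "(drop s x, drop s y) \<in> aligned_avoiding s a b q t"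
    using len avoid[of "Suc _"]
    by (auto simp: aligned_avoiding_def window_def add.commute)
  ultimately show "(x, y) \<in> (\<lambda>((u, v), (x, y)). (u @ x, v @ y)) `
     (({u. length u = s} \<times> {v. length v = s} - {(a, b)}) \<times> aligned_avoiding s a b q t)"
    by (intro image_eqI[where x = "((take s x, take s y), (drop s x, drop s y))"]) auto
qed

lemma card_aligned_avoiding_le:
  assumes "length a = s" and "length b = s"
  shows "card (aligned_avoiding s a b q t) \<le> (4 ^ s - 1) ^ q * 4 ^ t"
proof (induction q)
  case 0
  have "aligned_avoiding s a b 0 t = {x. length x = t} \<times> {y. length y = t}"
    by (auto simp: aligned_avoiding_def)
  then show ?case
    by (simp add: card_cartesian_product card_bool_lists_length power_mult_distrib [symmetric])
next
  case (Suc q)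
  let ?D = "{u :: bool list. length u = s} \<times> {v :: bool list. length v = s} - {(a, b)}"
  have card_D: "card ?D = 4 ^ s - 1"
    using assms by (simp add: card_Diff_singleton finite_list_length card_cartesian_product
        card_bool_lists_length power_mult_distrib [symmetric])
  have "finite (?D \<times> aligned_avoiding s a b q t)"
    by (simp add: finite_list_length finite_aligned_avoiding)
  then have "card (aligned_avoiding s a b (Suc q) t) \<le> card (?D \<times> aligned_avoiding s a b q t)"
    using aligned_avoiding_Suc_subset by (rule surj_card_le)
  also have "\<dots> = (4 ^ s - 1) * card (aligned_avoiding s a b q t)"
    by (simp only: card_cartesian_product card_D)
  also have "\<dots> \<le> (4 ^ s - 1) * ((4 ^ s - 1) ^ q * 4 ^ t)"
    using Suc.IH by (rule mult_left_mono) simp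
  also have "\<dots> = (4 ^ s - 1) ^ Suc q * 4 ^ t"
    by (simp only: power_Suc mult.assoc)
  finally show ?case .
qed

lemma avoiding_pair_in_aligned_avoiding:
  assumes "length x = r" and "length y = r"
    and "\<forall>i. i + s \<le> r \<longrightarrow> \<not> (window x i s = a \<and> window y i s = b)"
  shows "(x, y) \<in> aligned_avoiding s a b (r div s) (r mod s)"
proof -
  have "k * s + s \<le> r" if "k < r div s" for k
  proof -
    have "k * s + s = Suc k * s" by simp
    also have "\<dots> \<le> r div s * s" using that by (intro mult_le_mono1) simp
    also have "\<dots> \<le> r" by (rule div_times_less_eq_dividend)
    finally show ?thesis .
  qed
  then show ?thesis
    using assms by (auto simp: aligned_avoiding_def)
qed

lemma bad_pairs_subset_aligned_avoiding:
  "{(x, y). length x = r \<and> length y = r \<and> s_bad s x y} \<subseteq>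
     (\<Union>h\<in>{1..s}. aligned_avoiding s (unit_vec s h) (zero_vec s) (r div s) (r mod s)
                 \<union> aligned_avoiding s (zero_vec s) (unit_vec s h) (r div s) (r mod s))"
    (is "_ \<subseteq> (\<Union>h\<in>{1..s}. ?A h)")
proof
  fix z assume "z \<in> {(x, y). length x = r \<and> length y = r \<and> s_bad s x y}"
  then obtain x y where z: "z = (x, y)" and bad: "s_bad s x y"
    and len: "length x = r" "length y = r"
    by blast
  from bad obtain h where h: "h \<in> {1..s}" and
    "\<not> (\<exists>i j. i + s \<le> r \<and> j + s \<le> r \<and>
        window x i s = unit_vec s h \<and> window x j s = zero_vec s \<and>
        window y i s = zero_vec s \<and> window y j s = unit_vec s h)"
    unfolding s_bad_def s_good_def using len by auto
  then have "(\<forall>i. i + s \<le> r \<longrightarrow> \<not> (window x i s = unit_vec s h \<and> window y i s = zero_vec s))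
     \<or> (\<forall>j. j + s \<le> r \<longrightarrow> \<not> (window x j s = zero_vec s \<and> window y j s = unit_vec s h))"
    by blast
  then have "(x, y) \<in> ?A h"
    using avoiding_pair_in_aligned_avoiding[OF len] by blast
  then show "z \<in> (\<Union>h\<in>{1..s}. ?A h)"
    using h z by blast
qed

lemma f_le_aligned_bound:
  "f s r \<le> 2 * s * ((4 ^ s - 1) ^ (r div s) * 4 ^ (r mod s))"
proof -
  let ?M = "(4 ^ s - 1) ^ (r div s) * 4 ^ (r mod s) :: nat"
  let ?A = "\<lambda>a b. aligned_avoiding s a b (r div s) (r mod s)"
  have len: "length (unit_vec s h) = s" "length (zero_vec s) = s" for h
    by (simp_all add: unit_vec_def zero_vec_def)
  have "f s r \<le> card (\<Union>h\<in>{1..s}. ?A (unit_vec s h) (zero_vec s) \<union> ?A (zero_vec s) (unit_vec s h))"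
    unfolding f_def
    by (intro card_mono bad_pairs_subset_aligned_avoiding) (simp add: finite_aligned_avoiding)
  also have "\<dots> \<le> (\<Sum>h\<in>{1..s}. card (?A (unit_vec s h) (zero_vec s) \<union> ?A (zero_vec s) (unit_vec s h)))"
    by (rule card_UN_le) simp
  also have "\<dots> \<le> (\<Sum>h\<in>{1..s}. ?M + ?M)"
    by (intro sum_mono order.trans[OF card_Un_le] add_mono card_aligned_avoiding_le len)
  also have "\<dots> = 2 * s * ?M" by simp
  finally show ?thesis .
qed

lemma power_mult_power_le_root_powr:
  fixes b c :: real
  assumes "1 \<le> b" and "1 \<le> c" and "t < s"
  shows "c ^ q * b ^ t \<le> b ^ (s - 1) * (c powr (1 / real s)) powr real (q * s + t)"
proof -
  have "(c powr (1 / real s)) powr real (q * s + t) = c powr (real q + real t / real s)"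
    using \<open>t < s\<close> by (simp add: powr_powr field_simps)
  also have "\<dots> = c ^ q * c powr (real t / real s)"
    using \<open>1 \<le> c\<close> by (simp add: powr_add powr_realpow)
  finally have split: "(c powr (1 / real s)) powr real (q * s + t) = c ^ q * c powr (real t / real s)" .
  have "1 \<le> c powr (real t / real s)"
    using assms by (simp add: ge_one_powr_ge_zero)
  moreover have "0 \<le> c ^ q * b ^ (s - 1)"
    using assms by simp
  ultimately have "c ^ q * b ^ (s - 1) \<le> c ^ q * b ^ (s - 1) * c powr (real t / real s)"
    using mult_left_mono[of 1 "c powr (real t / real s)"] by fastforce
  moreover have "c ^ q * b ^ t \<le> c ^ q * b ^ (s - 1)"
    using assms by (intro mult_left_mono power_increasing) auto
  ultimately have "c ^ q * b ^ t \<le> c ^ q * b ^ (s - 1) * c powr (real t / real s)"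
    by linarith
  then show ?thesis
    unfolding split by (simp add: ac_simps)
qed

theorem lemma3:
  fixes s r :: nat
  assumes "1 \<le> s" and "s \<le> r"
  shows "real (f s r) \<le> 2 * real s * 4 ^ (s - 1) * ((4 ^ s - 1) powr (1 / real s)) powr real r"
proof -
  have "(4 :: real) ^ 1 \<le> 4 ^ s" using assms(1) by (intro power_increasing) auto
  then have c: "1 \<le> (4 :: real) ^ s - 1" by simp
  have "real (f s r) \<le> real (2 * s * ((4 ^ s - 1) ^ (r div s) * 4 ^ (r mod s)))"
    using f_le_aligned_bound by (rule of_nat_mono)
  also have "\<dots> = 2 * real s * ((4 ^ s - 1) ^ (r div s) * 4 ^ (r mod s))"
    by (simp add: of_nat_diff)
  also have "\<dots> \<le> 2 * real s * (4 ^ (s - 1) * ((4 ^ s - 1) powr (1 / real s)) powr real r)"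
    using power_mult_power_le_root_powr[OF _ c, of 4 "r mod s" s "r div s"] assms(1)
    by (intro mult_left_mono) auto
  finally show ?thesis by (simp add: ac_simps)
qed

end
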